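(* Let $2\le k<m$ be integers. Then \[ \mathbf{m}\left(\mathrm{Alt}(m)\circlearrowright\binom{[m]}{k}\right)\le\mathbf{m}\left(\mathrm{Sym}(m)\circlearrowright\binom{[m]}{k}\right)\le\binom{m-\lfloor k/2\rfloor}{\lceil k/2\rceil}. \] Consequently, for fixed $k$, if $\mathcal{C}_k$ is the family of symmetric (or alternating) groups $\mathrm{Sym}(m)$ (or $\mathrm{Alt}(m)$), $m>k$, acting on $k$-subsets of $[m]$, then \[ \lim_n\frac{\mathbf{F}_{\mathcal{C}_k}(n)}{\sqrt n}\le\frac{\sqrt{k!}}{(k/2)!}\quad\text{for } k \text{ even},\qquad \lim_n\frac{\mathbf{F}_{\mathcal{C}_k}(n)}{n^{\frac{k+1}{2k}}}\le\frac{k!^{\frac{k+1}{2k}}}{\lceil k/2\rceil!}\quad\text{for } k\text{ odd}. \]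
   Context: $[m]=\{1,\dots,m\}$, $\binom{[m]}{k}$ is the set of $k$-subsets of $[m]$, and $X\circlearrowright\binom{[m]}{k}$ is the permutation group induced by the natural action of $X\in\{\mathrm{Alt}(m),\mathrm{Sym}(m)\}$ on $k$-subsets (degree $n=\binom mk$). For a transitive permutation group $X$ on a finite set $\Omega$ with $|\Omega|\ge2$, a subset $A\subseteq\Omega$ is self-separable for $X$ if there exists $x\in X$ with $A\cap A^x=\emptyset$; $\mathbf{m}(X)$ is the minimum cardinality of a non-self-separable subset. For a family $\mathcal{C}$ of transitive groups, $\mathbf{F}_{\mathcal{C}}(n)=\max\{\mathbf{m}(X):X\in\mathcal{C}\text{ of degree } n\}$ for the degrees $n$ occurring in $\mathcal{C}$, and limits are over such $n$. *)

theory Defs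
  imports "HOL-Analysis.Analysis" "HOL-Combinatorics.Permutations" "HOL-Library.Liminf_Limsup"
begin

definition ksubsets :: "nat \<Rightarrow> nat \<Rightarrow> nat set set" where
  "ksubsets m k = {A. A \<subseteq> {1..m} \<and> card A = k}"

definition Sym_grp :: "nat \<Rightarrow> (nat \<Rightarrow> nat) set" where
  "Sym_grp m = {\<sigma>. \<sigma> permutes {1..m}}"

definition Alt_grp :: "nat \<Rightarrow> (nat \<Rightarrow> nat) set" where
  "Alt_grp m = {\<sigma>. \<sigma> permutes {1..m} \<and> evenperm \<sigma>}"

definition set_act :: "(nat \<Rightarrow> nat) \<Rightarrow> nat set \<Rightarrow> nat set" where
  "set_act \<sigma> B = \<sigma> ` B"

definition self_separable :: "('g \<Rightarrow> 'a \<Rightarrow> 'a) \<Rightarrow> 'g set \<Rightarrow> 'a set \<Rightarrow> bool" where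
  "self_separable act X A \<longleftrightarrow> (\<exists>x\<in>X. A \<inter> (act x ` A) = {})"

definition min_nonsep :: "('g \<Rightarrow> 'a \<Rightarrow> 'a) \<Rightarrow> 'g set \<Rightarrow> 'a set \<Rightarrow> nat" where
  "min_nonsep act X \<Omega> = (LEAST c. \<exists>A. A \<subseteq> \<Omega> \<and> card A = c \<and> \<not> self_separable act X A)"

definition mk :: "(nat \<Rightarrow> (nat \<Rightarrow> nat) set) \<Rightarrow> nat \<Rightarrow> nat \<Rightarrow> nat" where
  "mk G m k = min_nonsep set_act (G m) (ksubsets m k)"

definition degrees :: "nat \<Rightarrow> nat set" where
  "degrees k = {m choose k | m. k < m}"

definition F_fam :: "(nat \<Rightarrow> (nat \<Rightarrow> nat) set) \<Rightarrow> nat \<Rightarrow> nat \<Rightarrow> nat" where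
  "F_fam G k n = Max {mk G m k | m. k < m \<and> m choose k = n}"

end

theory Submission
  imports Defs
begin

(* Let a = k div 2 and b = (k + 1) div 2, so that a + b = k and a \<le> b. The k-subsets of [m]
   containing S = {1..a} are (m - a) choose b in number and form a family that is not
   self-separable for Sym(m): for every permutation \<sigma>, the set S \<union> \<sigma>\<^sup>-\<^sup>1(S) has at most
   2a \<le> k elements, so it extends to a k-set B, and then both B and \<sigma>(B) contain S.
   Passing to the subgroup Alt(m) only removes candidate separating permutations.

   For the limits, let n = m choose k, P = ((m - a) choose b) b! and Q = (m choose a) a!, so that
   n k! = Q P. P is a product of b factors at most m - a and Q one of a factors at least m - a,
   hence P\<^sup>a \<le> Q\<^sup>b, i.e. P\<^sup>k \<le> (n k!)\<^sup>b. This bounds F(n) / n^(b/k) by k!^(b/k) / b! at every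
   degree n, and b/k is 1/2 for even k and (k + 1)/(2k) for odd k. *)

lemma supersets_not_self_separable:
  assumes "finite \<Omega>" "S \<subseteq> \<Omega>" "2 * card S \<le> n" "n \<le> card \<Omega>"
  shows "\<not> self_separable (\<lambda>\<sigma> B. \<sigma> ` B) {\<sigma>. \<sigma> permutes \<Omega>} {B. S \<subseteq> B \<and> B \<subseteq> \<Omega> \<and> card B = n}"
    (is "\<not> self_separable _ _ ?F")
proof
  assume "self_separable (\<lambda>\<sigma> B. \<sigma> ` B) {\<sigma>. \<sigma> permutes \<Omega>} ?F"
  then obtain \<sigma> where \<sigma>: "\<sigma> permutes \<Omega>" and disjoint: "?F \<inter> (\<lambda>B. \<sigma> ` B) ` ?F = {}"
    unfolding self_separable_def by auto
  let ?C = "S \<union> inv \<sigma> ` S"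
  have "card ?C \<le> card S + card (inv \<sigma> ` S)" by (rule card_Un_le)
  also have "\<dots> \<le> 2 * card S" using card_image_le[OF finite_subset[OF assms(2,1)]] by simp
  finally have "card ?C \<le> n" using assms(3) by linarith
  moreover have "?C \<subseteq> \<Omega>"
    using assms(2) permutes_image[OF permutes_inv[OF \<sigma>]] by blast
  ultimately obtain B where B: "?C \<subseteq> B" "B \<subseteq> \<Omega>" "card B = n"
    using exists_subset_between assms(1,4) by meson
  have "S = \<sigma> ` inv \<sigma> ` S" by (simp add: image_image permutes_inverses(1)[OF \<sigma>])
  then have "S \<subseteq> \<sigma> ` B" using B(1) by blast
  moreover have "\<sigma> ` B \<subseteq> \<Omega>" using B(2) permutes_image[OF \<sigma>] by blast
  moreover have "card (\<sigma> ` B) = n" using B(3) card_image[OF permutes_inj_on[OF \<sigma>]] by simp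
  ultimately have "\<sigma> ` B \<in> ?F \<inter> (\<lambda>B. \<sigma> ` B) ` ?F" using B by blast
  with disjoint show False by blast
qed

lemma card_supersets:
  assumes "finite \<Omega>" "S \<subseteq> \<Omega>"
  shows "card {B. S \<subseteq> B \<and> B \<subseteq> \<Omega> \<and> card B = card S + b} = (card \<Omega> - card S) choose b"
proof -
  have fin: "finite S" "\<And>T. T \<subseteq> \<Omega> \<Longrightarrow> finite T" using assms finite_subset by blast+
  have "{B. S \<subseteq> B \<and> B \<subseteq> \<Omega> \<and> card B = card S + b} = (\<union>) S ` {T. T \<subseteq> \<Omega> - S \<and> card T = b}"
  proof (intro set_eqI iffI)
    fix B assume B: "B \<in> {B. S \<subseteq> B \<and> B \<subseteq> \<Omega> \<and> card B = card S + b}"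
    then have "card (B - S) = b" using card_Diff_subset[OF fin(1)] by simp
    with B show "B \<in> (\<union>) S ` {T. T \<subseteq> \<Omega> - S \<and> card T = b}"
      by (intro image_eqI[of _ _ "B - S"]) auto
  next
    fix B assume "B \<in> (\<union>) S ` {T. T \<subseteq> \<Omega> - S \<and> card T = b}"
    then obtain T where "T \<subseteq> \<Omega> - S" "card T = b" "B = S \<union> T" by blast
    then show "B \<in> {B. S \<subseteq> B \<and> B \<subseteq> \<Omega> \<and> card B = card S + b}"
      using assms(2) fin card_Un_disjoint[of S T] by auto
  qed
  moreover have "inj_on ((\<union>) S) {T. T \<subseteq> \<Omega> - S \<and> card T = b}"
    by (rule inj_onI) blast
  ultimately show ?thesis
    using n_subsets[of "\<Omega> - S" b] assms card_Diff_subset[OF fin(1) assms(2)] by (simp add: card_image)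
qed

lemma Sym_grp_not_self_separable_family:
  assumes "a \<le> b" "a + b \<le> m"
  shows "\<exists>A \<subseteq> ksubsets m (a + b). card A = (m - a) choose b \<and> \<not> self_separable set_act (Sym_grp m) A"
proof (intro exI conjI)
  let ?A = "{B. {1..a} \<subseteq> B \<and> B \<subseteq> {1..m} \<and> card B = card {1..a} + b}"
  show "?A \<subseteq> ksubsets m (a + b)" by (auto simp: ksubsets_def)
  show "card ?A = (m - a) choose b" by (subst card_supersets) (use assms in auto)
  show "\<not> self_separable set_act (Sym_grp m) ?A"
    unfolding Sym_grp_def set_act_def[abs_def] by (rule supersets_not_self_separable) (use assms in auto)
qed

lemma min_nonsep_le_card:
  assumes "A \<subseteq> \<Omega>" "\<not> self_separable act X A"
  shows "min_nonsep act X \<Omega> \<le> card A"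
  unfolding min_nonsep_def by (rule Least_le) (use assms in blast)

lemma min_nonsep_mono:
  assumes "X \<subseteq> Y" "A \<subseteq> \<Omega>" "\<not> self_separable act Y A"
  shows "min_nonsep act X \<Omega> \<le> min_nonsep act Y \<Omega>"
proof -
  obtain A' where A': "A' \<subseteq> \<Omega>" "card A' = min_nonsep act Y \<Omega>" "\<not> self_separable act Y A'"
    using LeastI_ex[of "\<lambda>c. \<exists>A. A \<subseteq> \<Omega> \<and> card A = c \<and> \<not> self_separable act Y A"] assms(2,3)
    unfolding min_nonsep_def by blast
  have "\<not> self_separable act X A'" using A'(3) assms(1) unfolding self_separable_def by blast
  with A' show ?thesis using min_nonsep_le_card by metis
qed

lemma mk_Sym_grp_le:
  assumes "a \<le> b" "a + b \<le> m"
  shows "mk Sym_grp m (a + b) \<le> (m - a) choose b"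
  using Sym_grp_not_self_separable_family[OF assms] min_nonsep_le_card unfolding mk_def by metis

lemma mk_Alt_grp_le_mk_Sym_grp:
  assumes "k \<le> m"
  shows "mk Alt_grp m k \<le> mk Sym_grp m k"
proof -
  have "Alt_grp m \<subseteq> Sym_grp m" unfolding Alt_grp_def Sym_grp_def by blast
  \<comment> \<open>with a = 0 the family is all of ksubsets m k, which ensures the LEAST in mk Sym_grp exists\<close>
  with Sym_grp_not_self_separable_family[of 0 k m] assms show ?thesis
    unfolding mk_def using min_nonsep_mono by (metis add_0 le0)
qed

lemma pow_le_binomial_fact: "(n - s) ^ s \<le> (n choose s) * fact s"
proof (induction s arbitrary: n)
  case 0
  show ?case by simp
next
  case (Suc s)
  have "(n - Suc s) ^ Suc s = (n - Suc s) * (n - 1 - s) ^ s" by simp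
  also have "\<dots> \<le> n * (((n - 1) choose s) * fact s)"
    using Suc.IH[of "n - 1"] by (intro mult_le_mono) auto
  also have "\<dots> = (Suc s * (n choose Suc s)) * fact s"
    by (simp only: binomial_absorption mult.assoc)
  also have "\<dots> = (n choose Suc s) * fact (Suc s)" by (simp add: algebra_simps)
  finally show ?case .
qed

lemma binomial_fact_add:
  assumes "a + b \<le> m"
  shows "(m choose (a + b)) * fact (a + b) = ((m choose a) * fact a) * (((m - a) choose b) * fact b)"
proof -
  have "fact (m - (a + b)) * ((m choose (a + b)) * fact (a + b)) = fact m"
    using binomial_fact_lemma[of "a + b" m] assms by (simp add: ac_simps)
  also have "fact m = fact (m - a) * ((m choose a) * fact a)"
    using binomial_fact_lemma[of a m] assms by (simp add: ac_simps)
  also have "fact (m - a) = fact (m - (a + b)) * (((m - a) choose b) * fact b)"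
    using binomial_fact_lemma[of b "m - a"] assms by (simp add: ac_simps)
  finally show ?thesis by (simp add: ac_simps)
qed

lemma binomial_fact_power_le:
  assumes "a + b \<le> m"
  shows "(((m - a) choose b) * fact b) ^ (a + b) \<le> ((m choose (a + b)) * fact (a + b)) ^ b"
proof -
  define P where "P = ((m - a) choose b) * fact b"
  define Q where "Q = (m choose a) * fact a"
  have "P ^ a \<le> ((m - a) ^ b) ^ a"
    unfolding P_def by (intro power_mono binomial_fact_pow) simp
  also have "\<dots> = ((m - a) ^ a) ^ b" by (simp flip: power_mult add: mult.commute)
  also have "\<dots> \<le> Q ^ b"
    unfolding Q_def by (intro power_mono pow_le_binomial_fact) simp
  finally have "P ^ a * P ^ b \<le> Q ^ b * P ^ b" by simp
  then show ?thesis
    using binomial_fact_add[OF assms] by (simp add: P_def Q_def power_add power_mult_distrib)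
qed

lemma le_powr_if_power_le:
  fixes x y :: real
  assumes "0 \<le> x" "0 < y" "0 < k" "x ^ k \<le> y ^ b"
  shows "x \<le> y powr (real b / real k)"
proof (cases "x = 0")
  case False
  with assms(1) have "x = (x ^ k) powr (1 / real k)"
    using assms(3) by (simp add: powr_realpow[symmetric] powr_powr)
  also have "\<dots> \<le> (y ^ b) powr (1 / real k)"
    using assms by (intro powr_mono2) auto
  also have "\<dots> = y powr (real b / real k)"
    using assms(2) by (simp add: powr_realpow[symmetric] powr_powr)
  finally show ?thesis .
qed simp

lemma F_fam_attained:
  assumes "0 < k" "n \<in> degrees k"
  obtains m where "k < m" "m choose k = n" "F_fam G k n = mk G m k"
proof -
  let ?M = "{m. k < m \<and> m choose k = n}"
  have "?M \<subseteq> {..k + n * fact k}"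
  proof (rule subsetI)
    fix m assume m: "m \<in> ?M"
    have "m - k \<le> (m - k) ^ k" using m assms(1) by (intro self_le_power) auto
    also have "\<dots> \<le> n * fact k" using m pow_le_binomial_fact[of m k] by simp
    finally show "m \<in> {..k + n * fact k}" by simp
  qed
  then have "finite ?M" by (rule finite_subset) simp
  moreover have "?M \<noteq> {}" using assms(2) unfolding degrees_def by blast
  moreover have "F_fam G k n = Max ((\<lambda>m. mk G m k) ` ?M)"
    unfolding F_fam_def by (simp add: setcompr_eq_image)
  ultimately have "F_fam G k n \<in> (\<lambda>m. mk G m k) ` ?M" by simp
  then obtain m where "m \<in> ?M" "F_fam G k n = mk G m k" by (rule imageE)
  then show ?thesis by (intro that[of m]) simp_all
qed

lemma F_fam_div_powr_le:
  assumes "a + b = k" "0 < k" "n \<in> degrees k"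
    and mk_le: "\<And>m. k < m \<Longrightarrow> mk G m k \<le> (m - a) choose b"
  shows "real (F_fam G k n) / real n powr (real b / real k) \<le> fact k powr (real b / real k) / fact b"
proof -
  obtain m where m: "k < m" "m choose k = n" "F_fam G k n = mk G m k"
    using F_fam_attained assms(2,3) .
  define c where "c = (m - a) choose b"
  define e where "e = real b / real k"
  have "a + b \<le> m" using assms(1) m(1) by simp
  from binomial_fact_power_le[OF this] have "(c * fact b) ^ k \<le> (n * fact k) ^ b"
    unfolding assms(1) m(2) c_def .
  then have "real ((c * fact b) ^ k) \<le> real ((n * fact k) ^ b)" by (simp only: of_nat_le_iff)
  then have power_le: "(real c * fact b) ^ k \<le> (real n * fact k) ^ b" by simp
  have n_pos: "0 < n" using m(1,2) by auto
  have "real (F_fam G k n) * fact b \<le> real c * fact b"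
    using mk_le[OF m(1)] m(3) c_def by (intro mult_right_mono) simp_all
  also have "\<dots> \<le> (real n * fact k) powr e"
    unfolding e_def using power_le n_pos assms(2) by (intro le_powr_if_power_le) auto
  also have "\<dots> = fact k powr e * real n powr e" by (simp add: powr_mult)
  finally show ?thesis using n_pos unfolding e_def by (simp add: field_simps)
qed

lemma Limsup_inf_principal_le:
  assumes "\<And>n. n \<in> D \<Longrightarrow> f n \<le> c"
  shows "Limsup (inf F (principal D)) f \<le> c"
  by (rule Limsup_bounded) (simp add: eventually_inf_principal assms)

lemma Limsup_F_fam_le:
  assumes "a + b = k" "0 < k" "\<And>m. k < m \<Longrightarrow> mk G m k \<le> (m - a) choose b"
  shows "Limsup (inf sequentially (principal (degrees k)))
           (\<lambda>n. ereal (real (F_fam G k n) / real n powr (real b / real k)))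
         \<le> ereal (fact k powr (real b / real k) / fact b)"
  using F_fam_div_powr_le[OF assms(1,2) _ assms(3)] by (intro Limsup_inf_principal_le) simp

theorem lemma8p1:
  fixes k :: nat
  assumes "2 \<le> k"
  shows "(\<forall>m. k < m \<longrightarrow>
            mk Alt_grp m k \<le> mk Sym_grp m k \<and>
            mk Sym_grp m k \<le> (m - k div 2) choose ((k + 1) div 2))
       \<and> (\<forall>G \<in> {Sym_grp, Alt_grp}.
            (even k \<longrightarrow>
              Limsup (inf sequentially (principal (degrees k)))
                (\<lambda>n. ereal (real (F_fam G k n) / sqrt (real n)))
              \<le> ereal (sqrt (fact k) / fact (k div 2)))
          \<and> (odd k \<longrightarrow>
              Limsup (inf sequentially (principal (degrees k)))
                (\<lambda>n. ereal (real (F_fam G k n) / real n powr ((real k + 1) / (2 * real k))))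
              \<le> ereal ((fact k) powr ((real k + 1) / (2 * real k)) / fact ((k + 1) div 2))))"
proof -
  define a b where "a = k div 2" and "b = (k + 1) div 2"
  have ab: "a \<le> b" "a + b = k" unfolding a_def b_def by presburger+
  have Sym_le: "mk Sym_grp m k \<le> (m - a) choose b" if "k < m" for m
    using mk_Sym_grp_le[OF ab(1), of m] ab(2) that by simp
  have Limsup_le: "Limsup (inf sequentially (principal (degrees k)))
        (\<lambda>n. ereal (real (F_fam G k n) / real n powr (real b / real k)))
      \<le> ereal (fact k powr (real b / real k) / fact b)" if "G \<in> {Sym_grp, Alt_grp}" for G
    using that assms Sym_le
    by (intro Limsup_F_fam_le[OF ab(2)]) (auto intro: le_trans[OF mk_Alt_grp_le_mk_Sym_grp])
  show ?thesis
  proof (intro conjI allI impI ballI)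
    fix m assume "k < m"
    then show "mk Alt_grp m k \<le> mk Sym_grp m k" "mk Sym_grp m k \<le> (m - k div 2) choose ((k + 1) div 2)"
      using mk_Alt_grp_le_mk_Sym_grp Sym_le unfolding a_def b_def by simp_all
  next
    fix G assume G: "G \<in> {Sym_grp, Alt_grp}" and "even k"
    then have "real b / real k = 1 / 2" "b = k div 2" using assms unfolding b_def by auto
    with Limsup_le[OF G] show "Limsup (inf sequentially (principal (degrees k)))
        (\<lambda>n. ereal (real (F_fam G k n) / sqrt (real n))) \<le> ereal (sqrt (fact k) / fact (k div 2))"
      by (simp add: powr_half_sqrt)
  next
    fix G assume G: "G \<in> {Sym_grp, Alt_grp}" and "odd k"
    then have "(real k + 1) / (2 * real k) = real b / real k"
      using assms unfolding b_def by (auto simp: field_simps elim!: oddE)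
    with Limsup_le[OF G] show "Limsup (inf sequentially (principal (degrees k)))
        (\<lambda>n. ereal (real (F_fam G k n) / real n powr ((real k + 1) / (2 * real k))))
      \<le> ereal ((fact k) powr ((real k + 1) / (2 * real k)) / fact ((k + 1) div 2))"
      by (simp add: b_def)
  qed
qed

end
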